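(* Let $\theta,\rho\in(0,1)$ and let $\mathcal I$ be a local quadrature rule with positive weights that is exact for constants (i.e. $\sum_i w_i=\mathrm{vol}(K)$ on each box $K$). Let $\Omega\in\mathbb{IR}^d$ be a box with nonempty interior, $f:\Omega\to\mathbb R$ continuous, and $F$ an interval enclosure of $f$ that is Hölder continuous on $\Omega$ with constant $C>0$ and exponent $\gamma\in(0,1]$. Run AdaQuad with quadrature rule $\mathcal I$, marking rule $\mathrm{D\ddot orfler}_\theta$ and refinement rule $\mathrm{H\ddot older}_\rho$ (using $F,C,\gamma$). Then for all $n\in\mathbb N_0$ $$\Big|\int_\Omega f(x)\,dx-\mathrm Q_n\Big|\le\eta_n\quad\text{and}\quad \eta_{n+1}\le(1-\theta(1-\rho))\,\eta_n,$$ in particular $\eta_n\to0$.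
   Context: Intervals: $\mathbb{IR}=\{[\underline X,\overline X]\subset\mathbb R:\underline X\le\overline X\}$; $\mathbb{IR}^N$ denotes boxes $K=K_1\times\dots\times K_N$. Width $w([\underline X,\overline X])=\overline X-\underline X$, and for a box $w(K)=\max_iw(K_i)$. For a box $\Omega$ and $\phi:\Omega\to\mathbb R^m$, a map $F$ from boxes $K\subset\Omega$ to $\mathbb{IR}^m$ is an interval enclosure of $\phi$ if it is inclusion isotonic ($K'\subset K\Rightarrow F(K')\subset F(K)$) and $\phi(K)\subset F(K)$ for all boxes $K\subset\Omega$. $F$ is Hölder continuous on $\Omega$ with exponent $\gamma$ and constant $C$ if $w(F(K))\le Cw(K)^\gamma$ for all boxes $K\subset\Omega$. A local quadrature rule assigns $\mathcal I(f,K)=\sum_{i=1}^Nw_if(x_i)$ with weights $w_i$ and nodes $x_i\in K$. A partition of $\Omega$ is a finite set of boxes covering $\Omega$ with pairwise disjoint interiors. AdaQuad (with marking rule $\mathcal M$ and refinement rule $\mathcal R$): $\mathcal P_0=\{\Omega\}$; given $\mathcal P_n$, set $\eta_K=w(F(K))\mathrm{vol}(K)$, $\widetilde{\mathcal P}_n=\mathcal M(\mathcal P_n,(\eta_K))$, $\mathcal P_{n+1}=(\mathcal P_n\setminus\widetilde{\mathcal P}_n)\cup\bigcup_{K\in\widetilde{\mathcal P}_n}\mathcal R(K)$; outputs $\mathrm Q_n=\sum_{K\in\mathcal P_n}\mathcal I(f,K)$, $\eta_n=\sum_{K\in\mathcal P_n}w(F(K))\mathrm{vol}(K)$. $\mathrm{D\ddot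 orfler}_\theta$: starting from the empty marked set, repeatedly add to the marked set all unmarked elements whose indicator equals the maximum indicator among unmarked elements, as long as the sum of marked indicators is $<\theta$ times the total sum of indicators; return the marked set. $\mathrm{H\ddot older}_\rho$: for a box $K=K_1\times\dots\times K_d$ with $\eta_K=w(F(K))\mathrm{vol}(K)$: if $\eta_K=0$ return $\{K\}$; otherwise, for each $i$ let $l_i=w(K_i)$ and $m_i=\lceil l_i(C\,\mathrm{vol}(K)/(\rho\eta_K))^{1/\gamma}\rceil$, split $K_i$ into $m_i$ equal consecutive closed subintervals, and return the set of all $\prod_im_i$ product boxes formed from these subintervals. *)

theory Defs
  imports "HOL-Analysis.Analysis"
begin

text \<open>A box in R^d (d = CARD('n)) is represented by its pair of corners (lower, upper);
  it is a genuine box when lower \<le> upper componentwise, and its point set is cbox.\<close>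

type_synonym 'n box = "(real^'n) \<times> (real^'n)"

definition is_box :: "'n::finite box \<Rightarrow> bool" where
  "is_box K \<longleftrightarrow> (\<forall>i. fst K $ i \<le> snd K $ i)"

definition box_set :: "'n::finite box \<Rightarrow> (real^'n) set" where
  "box_set K = cbox (fst K) (snd K)"

definition box_width :: "'n::finite box \<Rightarrow> real" where
  "box_width K = Max (range (\<lambda>i. snd K $ i - fst K $ i))"

definition box_vol :: "'n::finite box \<Rightarrow> real" where
  "box_vol K = (\<Prod>i\<in>UNIV. snd K $ i - fst K $ i)"

type_synonym ival = "real \<times> real"

definition iwidth :: "ival \<Rightarrow> real" where
  "iwidth X = snd X - fst X"

definition iset :: "ival \<Rightarrow> real set" where
  "iset X = {fst X..snd X}"

definition interval_enclosure ::
  "'n::finite box \<Rightarrow> (real^'n \<Rightarrow> real) \<Rightarrow> ('n box \<Rightarrow> ival) \<Rightarrow> bool" where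
  "interval_enclosure \<Omega> \<phi> F \<longleftrightarrow>
     (\<forall>K. is_box K \<and> box_set K \<subseteq> box_set \<Omega> \<longrightarrow>
        fst (F K) \<le> snd (F K) \<and> \<phi> ` box_set K \<subseteq> iset (F K) \<and>
        (\<forall>K'. is_box K' \<and> box_set K' \<subseteq> box_set K \<longrightarrow> iset (F K') \<subseteq> iset (F K)))"

definition hoelder_continuous ::
  "'n::finite box \<Rightarrow> ('n box \<Rightarrow> ival) \<Rightarrow> real \<Rightarrow> real \<Rightarrow> bool" where
  "hoelder_continuous \<Omega> F C \<gamma> \<longleftrightarrow>
     (\<forall>K. is_box K \<and> box_set K \<subseteq> box_set \<Omega> \<longrightarrow> iwidth (F K) \<le> C * box_width K powr \<gamma>)"

definition local_quad_rule :: "('n::finite box \<Rightarrow> (real \<times> (real^'n)) list) \<Rightarrow> bool" where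
  "local_quad_rule R \<longleftrightarrow> (\<forall>K. is_box K \<longrightarrow> (\<forall>(w, x)\<in>set (R K). x \<in> box_set K))"

definition positive_weights :: "('n::finite box \<Rightarrow> (real \<times> (real^'n)) list) \<Rightarrow> bool" where
  "positive_weights R \<longleftrightarrow> (\<forall>K. is_box K \<longrightarrow> (\<forall>(w, x)\<in>set (R K). w > 0))"

definition exact_for_constants :: "('n::finite box \<Rightarrow> (real \<times> (real^'n)) list) \<Rightarrow> bool" where
  "exact_for_constants R \<longleftrightarrow> (\<forall>K. is_box K \<longrightarrow> sum_list (map fst (R K)) = box_vol K)"

definition quad :: "('n::finite box \<Rightarrow> (real \<times> (real^'n)) list) \<Rightarrow> (real^'n \<Rightarrow> real) \<Rightarrow> 'n box \<Rightarrow> real" where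
  "quad R f K = sum_list (map (\<lambda>(w, x). w * f x) (R K))"

definition dorfler_step :: "'a set \<Rightarrow> ('a \<Rightarrow> real) \<Rightarrow> 'a set \<Rightarrow> 'a set" where
  "dorfler_step P \<eta> M = M \<union> {K \<in> P - M. \<eta> K = Max (\<eta> ` (P - M))}"

definition dorfler :: "real \<Rightarrow> 'a set \<Rightarrow> ('a \<Rightarrow> real) \<Rightarrow> 'a set" where
  "dorfler \<theta> P \<eta> =
     (let it = (\<lambda>k. (dorfler_step P \<eta> ^^ k) {})
      in it (LEAST k. \<not> (sum \<eta> (it k) < \<theta> * sum \<eta> P)))"

definition hoelder_refine ::
  "real \<Rightarrow> real \<Rightarrow> real \<Rightarrow> ('n::finite box \<Rightarrow> ival) \<Rightarrow> 'n box \<Rightarrow> 'n box set" where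
  "hoelder_refine \<rho> C \<gamma> F K =
     (let \<eta> = iwidth (F K) * box_vol K in
      if \<eta> = 0 then {K} else
      (let l = (\<lambda>i. snd K $ i - fst K $ i);
           m = (\<lambda>i. nat \<lceil>l i * (C * box_vol K / (\<rho> * \<eta>)) powr (1 / \<gamma>)\<rceil>)
       in (\<lambda>j. ((\<chi> i. fst K $ i + real (j i) * l i / real (m i)),
                (\<chi> i. fst K $ i + real (j i + 1) * l i / real (m i))))
          ` {j. \<forall>i. j i < m i}))"

primrec adaquad_partition ::
  "('n::finite box set \<Rightarrow> ('n box \<Rightarrow> real) \<Rightarrow> 'n box set) \<Rightarrow> ('n box \<Rightarrow> 'n box set)
   \<Rightarrow> ('n box \<Rightarrow> ival) \<Rightarrow> 'n box \<Rightarrow> nat \<Rightarrow> 'n box set" where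
  "adaquad_partition M R F \<Omega> 0 = {\<Omega>}"
| "adaquad_partition M R F \<Omega> (Suc n) =
     (let P = adaquad_partition M R F \<Omega> n;
          Pm = M P (\<lambda>K. iwidth (F K) * box_vol K)
      in (P - Pm) \<union> \<Union> (R ` Pm))"

definition adaquad_Q ::
  "('n::finite box \<Rightarrow> (real \<times> (real^'n)) list) \<Rightarrow> (real^'n \<Rightarrow> real)
   \<Rightarrow> ('n box set \<Rightarrow> ('n box \<Rightarrow> real) \<Rightarrow> 'n box set) \<Rightarrow> ('n box \<Rightarrow> 'n box set)
   \<Rightarrow> ('n box \<Rightarrow> ival) \<Rightarrow> 'n box \<Rightarrow> nat \<Rightarrow> real" where
  "adaquad_Q Rq f M R F \<Omega> n = (\<Sum>K\<in>adaquad_partition M R F \<Omega> n. quad Rq f K)"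

definition adaquad_eta ::
  "('n::finite box set \<Rightarrow> ('n box \<Rightarrow> real) \<Rightarrow> 'n box set) \<Rightarrow> ('n box \<Rightarrow> 'n box set)
   \<Rightarrow> ('n box \<Rightarrow> ival) \<Rightarrow> 'n box \<Rightarrow> nat \<Rightarrow> real" where
  "adaquad_eta M R F \<Omega> n = (\<Sum>K\<in>adaquad_partition M R F \<Omega> n. iwidth (F K) * box_vol K)"

end

theory Submission
  imports Defs
begin

text \<open>Every partition produced by the algorithm is a division of \<Omega> into genuine boxes, so the
  integral splits into the integrals over its boxes. On each box both the integral and the
  quadrature value (positive weights summing to the volume, nodes in the box) lie in
  [lo * vol K, hi * vol K] for the enclosure F K = [lo, hi], which gives the error bound
  by the indicator sum. For the contraction, Hoelder refinement cuts each side of a marked box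
  into so many pieces that every child K' has w(F K') \<le> C w(K')^\<gamma> \<le> \<rho> \<eta>_K / vol K;
  summing over the children, whose volumes add up to vol K, shows that refining K replaces
  \<eta>_K by at most \<rho> \<eta>_K. Since Doerfler marking selects at least the fraction \<theta> of the
  total indicator, the sum drops by at least \<theta> (1 - \<rho>) times itself in each step.\<close>

abbreviation estimator :: "('n::finite box \<Rightarrow> ival) \<Rightarrow> 'n box \<Rightarrow> real" where
  "estimator F K \<equiv> iwidth (F K) * box_vol K"

lemma box_set_eq_empty_iff: "box_set K = {} \<longleftrightarrow> \<not> is_box K"
  unfolding box_set_def is_box_def using interval_ne_empty_cart(1) by blast

lemma inj_on_box_set: "inj_on box_set {K. is_box K}"
  by (rule inj_onI) (auto simp: box_set_def eq_cbox box_set_eq_empty_iff[unfolded box_set_def] prod_eq_iff)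

lemma content_box_set: "is_box K \<Longrightarrow> Henstock_Kurzweil_Integration.content (box_set K) = box_vol K"
  using box_set_eq_empty_iff[of K] by (simp add: box_set_def box_vol_def content_cbox_cart)

lemma box_vol_nonneg: "is_box K \<Longrightarrow> 0 \<le> box_vol K"
  unfolding box_vol_def is_box_def by (intro prod_nonneg) auto

text \<open>A nonempty cbox determines its corners, so no nondegeneracy of the boxes is needed here.\<close>

lemma
  assumes "box_set ` P division_of S"
  shows division_of_box_set_memD: "K \<in> P \<Longrightarrow> is_box K" "K \<in> P \<Longrightarrow> box_set K \<subseteq> S"
    and division_of_box_set_inj: "inj_on box_set P"
    and division_of_box_set_finite: "finite P"
proof -
  show is_box: "K \<in> P \<Longrightarrow> is_box K" for K
    using assms box_set_eq_empty_iff by blast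
  show "K \<in> P \<Longrightarrow> box_set K \<subseteq> S" for K
    using assms by blast
  show inj: "inj_on box_set P"
    using inj_on_box_set by (rule inj_on_subset) (auto intro: is_box)
  show "finite P"
    using assms inj finite_imageD by blast
qed

lemma box_width_nonneg:
  assumes "is_box K"
  shows "0 \<le> box_width K"
proof -
  have "box_width K \<in> range (\<lambda>i. snd K $ i - fst K $ i)"
    unfolding box_width_def by (rule Max_in) auto
  then show ?thesis
    using assms unfolding is_box_def by auto
qed

lemma box_side_pos:
  assumes "is_box K" "box_vol K \<noteq> 0"
  shows "0 < snd K $ i - fst K $ i"
proof -
  have "snd K $ i - fst K $ i \<noteq> 0"
    using assms(2) unfolding box_vol_def by auto
  moreover have "fst K $ i \<le> snd K $ i"
    using assms(1) unfolding is_box_def by blast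
  ultimately show ?thesis
    by linarith
qed

lemma interior_box_set_disjoint:
  assumes "snd K1 $ i \<le> fst K2 $ i"
  shows "interior (box_set K1) \<inter> interior (box_set K2) = {}"
proof -
  have False if "x \<in> interior (box_set K1)" "x \<in> interior (box_set K2)" for x
  proof -
    from that have "x $ i < snd K1 $ i" "fst K2 $ i < x $ i"
      by (auto simp: box_set_def mem_box_cart)
    with assms show False
      by linarith
  qed
  then show ?thesis
    by blast
qed

lemma refinement_parentE:
  assumes "Pm \<subseteq> P" "\<And>K. K \<in> Pm \<Longrightarrow> \<phi> ` R K division_of \<phi> K"
    and K: "K \<in> (P - Pm) \<union> \<Union>(R ` Pm)"
  obtains A where "A \<in> P" "\<phi> K \<subseteq> \<phi> A" "A \<in> Pm \<longrightarrow> K \<in> R A" "A \<notin> Pm \<longrightarrow> K = A"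
proof (cases "K \<in> P - Pm")
  case False
  then obtain A where "A \<in> Pm" "K \<in> R A"
    using K by blast
  moreover from this have "\<phi> K \<subseteq> \<phi> A"
    using division_ofD(2)[OF assms(2)] by blast
  ultimately show ?thesis
    using that \<open>Pm \<subseteq> P\<close> by blast
qed (use that in blast)

lemma refinement_interior_disjoint:
  fixes \<phi> :: "'b \<Rightarrow> 'a::euclidean_space set"
  assumes P: "\<phi> ` P division_of S" and inj: "inj_on \<phi> P" and "Pm \<subseteq> P"
    and R: "\<And>K. K \<in> Pm \<Longrightarrow> \<phi> ` R K division_of \<phi> K"
    and K: "K1 \<in> (P - Pm) \<union> \<Union>(R ` Pm)" "K2 \<in> (P - Pm) \<union> \<Union>(R ` Pm)" "\<phi> K1 \<noteq> \<phi> K2"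
  shows "interior (\<phi> K1) \<inter> interior (\<phi> K2) = {}"
proof -
  obtain A1 where A1: "A1 \<in> P" "\<phi> K1 \<subseteq> \<phi> A1"
      "A1 \<in> Pm \<longrightarrow> K1 \<in> R A1" "A1 \<notin> Pm \<longrightarrow> K1 = A1"
    using refinement_parentE[OF \<open>Pm \<subseteq> P\<close> R K(1)] .
  obtain A2 where A2: "A2 \<in> P" "\<phi> K2 \<subseteq> \<phi> A2"
      "A2 \<in> Pm \<longrightarrow> K2 \<in> R A2" "A2 \<notin> Pm \<longrightarrow> K2 = A2"
    using refinement_parentE[OF \<open>Pm \<subseteq> P\<close> R K(2)] .
  show ?thesis
  proof (cases "A1 = A2")
    case True
    show ?thesis
    proof (cases "A1 \<in> Pm")
      case True
      then have "\<phi> K1 \<in> \<phi> ` R A1" "\<phi> K2 \<in> \<phi> ` R A1"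
        using A1 A2 \<open>A1 = A2\<close> by auto
      then show ?thesis
        using division_ofD(5)[OF R[OF True]] K(3) by blast
    next
      case False
      then show ?thesis
        using A1 A2 \<open>A1 = A2\<close> K(3) by simp
    qed
  next
    case False
    then have "interior (\<phi> A1) \<inter> interior (\<phi> A2) = {}"
      using A1(1) A2(1) division_ofD(5)[OF P] inj_on_eq_iff[OF inj] by (metis imageI)
    then show ?thesis
      using A1(2) A2(2) interior_mono by blast
  qed
qed

lemma division_of_refine:
  fixes \<phi> :: "'b \<Rightarrow> 'a::euclidean_space set"
  assumes P: "\<phi> ` P division_of S" and inj: "inj_on \<phi> P" and "Pm \<subseteq> P"
    and R: "\<And>K. K \<in> Pm \<Longrightarrow> \<phi> ` R K division_of \<phi> K"
  shows "\<phi> ` ((P - Pm) \<union> \<Union>(R ` Pm)) division_of S"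
proof (rule division_ofI)
  have "finite (\<phi> ` P)" "\<And>K. K \<in> Pm \<Longrightarrow> finite (\<phi> ` R K)"
    using P R by (auto dest: division_ofD(1))
  moreover have "finite Pm"
    using \<open>finite (\<phi> ` P)\<close> inj \<open>Pm \<subseteq> P\<close> by (meson finite_imageD finite_subset)
  moreover have "finite (\<phi> ` (P - Pm))"
    using \<open>finite (\<phi> ` P)\<close> by (rule finite_subset[rotated]) blast
  ultimately show "finite (\<phi> ` ((P - Pm) \<union> \<Union>(R ` Pm)))"
    by (simp add: image_Un image_UN)
next
  fix k assume "k \<in> \<phi> ` ((P - Pm) \<union> \<Union>(R ` Pm))"
  then obtain K where k: "k = \<phi> K" and K: "K \<in> (P - Pm) \<union> \<Union>(R ` Pm)"
    by blast
  obtain A where "A \<in> P" "\<phi> K \<subseteq> \<phi> A" "A \<in> Pm \<longrightarrow> K \<in> R A" "A \<notin> Pm \<longrightarrow> K = A"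
    using refinement_parentE[OF \<open>Pm \<subseteq> P\<close> R K] .
  then show "k \<subseteq> S" "k \<noteq> {}" "\<exists>a b. k = cbox a b"
    unfolding k using division_ofD(2-4)[OF P] division_ofD(3,4)[OF R]
    by (cases "A \<in> Pm"; fastforce)+
next
  fix k1 k2
  assume "k1 \<in> \<phi> ` ((P - Pm) \<union> \<Union>(R ` Pm))" "k2 \<in> \<phi> ` ((P - Pm) \<union> \<Union>(R ` Pm))"
    and "k1 \<noteq> k2"
  then show "interior k1 \<inter> interior k2 = {}"
    using refinement_interior_disjoint[OF P inj \<open>Pm \<subseteq> P\<close> R] by blast
next
  have "\<Union>(\<phi> ` \<Union>(R ` Pm)) = (\<Union>K\<in>Pm. \<Union>(\<phi> ` R K))"
    by blast
  also have "\<dots> = \<Union>(\<phi> ` Pm)"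
    using division_ofD(6)[OF R] by simp
  finally have "\<Union>(\<phi> ` ((P - Pm) \<union> \<Union>(R ` Pm))) = \<Union>(\<phi> ` (P - Pm)) \<union> \<Union>(\<phi> ` Pm)"
    by (simp add: image_Un)
  also have "\<dots> = S"
    using division_ofD(6)[OF P] \<open>Pm \<subseteq> P\<close> by blast
  finally show "\<Union>(\<phi> ` ((P - Pm) \<union> \<Union>(R ` Pm))) = S" .
qed

lemma estimator_nonneg:
  assumes "interval_enclosure \<Omega> f F" "is_box K" "box_set K \<subseteq> box_set \<Omega>"
  shows "0 \<le> estimator F K"
proof -
  have "fst (F K) \<le> snd (F K)"
    using assms unfolding interval_enclosure_def by blast
  then show ?thesis
    using box_vol_nonneg[OF assms(2)] by (simp add: iwidth_def)
qed

definition grid_cell :: "'n::finite box \<Rightarrow> ('n \<Rightarrow> nat) \<Rightarrow> ('n \<Rightarrow> nat) \<Rightarrow> 'n box" where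
  "grid_cell K m j =
     ((\<chi> i. fst K $ i + real (j i) * (snd K $ i - fst K $ i) / real (m i)),
      (\<chi> i. fst K $ i + real (j i + 1) * (snd K $ i - fst K $ i) / real (m i)))"

lemma grid_index_eq_PiE: "{j :: 'n::finite \<Rightarrow> nat. \<forall>i. j i < m i} = Pi\<^sub>E UNIV (\<lambda>i. {..<m i})"
  by (auto simp: PiE_UNIV_domain)

lemma finite_grid_index: "finite {j :: 'n::finite \<Rightarrow> nat. \<forall>i. j i < m i}"
  unfolding grid_index_eq_PiE by (simp add: finite_PiE)

lemma card_grid_index: "card {j :: 'n::finite \<Rightarrow> nat. \<forall>i. j i < m i} = (\<Prod>i\<in>UNIV. m i)"
  unfolding grid_index_eq_PiE by (simp add: card_PiE)

lemma grid_cell_side: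
  "snd (grid_cell K m j) $ i - fst (grid_cell K m j) $ i = (snd K $ i - fst K $ i) / real (m i)"
  by (simp add: grid_cell_def diff_divide_distrib[symmetric] algebra_simps)

lemma is_box_grid_cell: "is_box K \<Longrightarrow> is_box (grid_cell K m j)"
  using grid_cell_side[of K m j] unfolding is_box_def
  by (metis diff_ge_0_iff_ge divide_nonneg_nonneg of_nat_0_le_iff)

lemma box_vol_grid_cell: "box_vol (grid_cell K m j) = (\<Prod>i\<in>UNIV. (snd K $ i - fst K $ i) / real (m i))"
  unfolding box_vol_def grid_cell_side ..

lemma box_width_grid_cell:
  "box_width (grid_cell K m j) = Max (range (\<lambda>i. (snd K $ i - fst K $ i) / real (m i)))"
  unfolding box_width_def grid_cell_side ..

lemma sum_box_vol_grid_cells: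
  assumes "\<And>i. m i > 0"
  shows "(\<Sum>j | \<forall>i. j i < m i. box_vol (grid_cell K m j)) = box_vol K"
proof -
  have "(\<Sum>j | \<forall>i. j i < m i. box_vol (grid_cell K m j))
      = real (\<Prod>i\<in>UNIV. m i) * (\<Prod>i\<in>UNIV. (snd K $ i - fst K $ i) / real (m i))"
    by (simp add: box_vol_grid_cell card_grid_index)
  also have "\<dots> = (\<Prod>i\<in>UNIV. real (m i) * ((snd K $ i - fst K $ i) / real (m i)))"
    by (simp add: prod.distrib[symmetric])
  also have "\<dots> = box_vol K"
    unfolding box_vol_def using assms by (intro prod.cong) (auto simp: field_simps)
  finally show ?thesis .
qed

lemma grid_cell_subset:
  assumes "is_box K" "\<forall>i. j i < m i"
  shows "box_set (grid_cell K m j) \<subseteq> box_set K"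
proof -
  have "fst K $ i \<le> fst (grid_cell K m j) $ i \<and> snd (grid_cell K m j) $ i \<le> snd K $ i" for i
  proof -
    have l: "0 \<le> snd K $ i - fst K $ i"
      using assms(1) unfolding is_box_def by simp
    have "real (j i + 1) \<le> real (m i)"
      using spec[OF assms(2), of i] by linarith
    then have "real (j i + 1) * (snd K $ i - fst K $ i) / real (m i) \<le> snd K $ i - fst K $ i"
      using l assms(2) by (simp add: divide_le_eq mult_right_mono mult.commute)
    then show ?thesis
      using l by (simp add: grid_cell_def)
  qed
  then show ?thesis
    unfolding box_set_def by (intro subset_interval_imp_cart(1)) blast
qed

lemma grid_cell_le:
  assumes "is_box K" "j1 i < j2 i"
  shows "snd (grid_cell K m j1) $ i \<le> fst (grid_cell K m j2) $ i"
proof -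
  have "real (j1 i + 1) * (snd K $ i - fst K $ i) \<le> real (j2 i) * (snd K $ i - fst K $ i)"
    using assms unfolding is_box_def by (intro mult_right_mono) auto
  then show ?thesis
    by (simp add: grid_cell_def divide_right_mono)
qed

lemma grid_cells_interior_disjoint:
  assumes "is_box K" "j1 \<noteq> j2"
  shows "interior (box_set (grid_cell K m j1)) \<inter> interior (box_set (grid_cell K m j2)) = {}"
proof -
  obtain i where "j1 i < j2 i \<or> j2 i < j1 i"
    using assms(2) by (meson ext linorder_neqE_nat)
  then show ?thesis
    using interior_box_set_disjoint grid_cell_le[OF assms(1)] by (metis inf_commute)
qed

lemma ex_grid_interval:
  fixes l y :: real
  assumes "0 \<le> y" "y \<le> l" "m > 0"
  shows "\<exists>k<m. real k * l / real m \<le> y \<and> y \<le> real (k + 1) * l / real m"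
proof (cases "l = 0")
  case True
  then show ?thesis
    using assms by auto
next
  case False
  define t where "t = y * real m / l"
  have "0 \<le> t" "t \<le> real m"
    using assms False by (auto simp: t_def field_simps mult_left_mono)
  define k where "k = min (m - 1) (nat \<lfloor>t\<rfloor>)"
  have "k < m" "real k \<le> t" "t \<le> real k + 1"
    using \<open>0 \<le> t\<close> \<open>t \<le> real m\<close> assms(3) by (auto simp: k_def min_def) linarith+
  moreover have "y = t * l / real m"
    using assms False by (simp add: t_def)
  ultimately show ?thesis
    using assms False by (intro exI[of _ k]) (auto simp: divide_right_mono mult_right_mono)
qed

lemma grid_cells_cover:
  assumes "is_box K" "\<And>i. m i > 0" "x \<in> box_set K"
  obtains j where "\<forall>i. j i < m i" "x \<in> box_set (grid_cell K m j)"
proof -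
  have "\<forall>i. \<exists>k<m i. real k * (snd K $ i - fst K $ i) / real (m i) \<le> x $ i - fst K $ i \<and>
      x $ i - fst K $ i \<le> real (k + 1) * (snd K $ i - fst K $ i) / real (m i)"
    using assms ex_grid_interval by (simp add: box_set_def mem_box_cart)
  then obtain j where "\<And>i. j i < m i"
    "\<And>i. real (j i) * (snd K $ i - fst K $ i) / real (m i) \<le> x $ i - fst K $ i \<and>
      x $ i - fst K $ i \<le> real (j i + 1) * (snd K $ i - fst K $ i) / real (m i)"
    by metis
  then show ?thesis
    by (intro that) (auto simp: box_set_def mem_box_cart grid_cell_def algebra_simps)
qed

lemma grid_cells_division:
  assumes "is_box K" "\<And>i. m i > 0"
  shows "box_set ` grid_cell K m ` {j. \<forall>i. j i < m i} division_of box_set K"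
proof (rule division_ofI)
  show "finite (box_set ` grid_cell K m ` {j. \<forall>i. j i < m i})"
    by (intro finite_imageI finite_grid_index)
  fix k assume "k \<in> box_set ` grid_cell K m ` {j. \<forall>i. j i < m i}"
  then obtain j where k: "k = box_set (grid_cell K m j)" and j: "\<forall>i. j i < m i"
    by blast
  show "k \<subseteq> box_set K"
    unfolding k using grid_cell_subset[OF assms(1) j] .
  show "k \<noteq> {}"
    unfolding k box_set_eq_empty_iff using is_box_grid_cell[OF assms(1)] by simp
  show "\<exists>a b. k = cbox a b"
    unfolding k box_set_def by blast
next
  fix k1 k2
  assume "k1 \<in> box_set ` grid_cell K m ` {j. \<forall>i. j i < m i}"
    "k2 \<in> box_set ` grid_cell K m ` {j. \<forall>i. j i < m i}" "k1 \<noteq> k2"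
  then obtain j1 j2 where "k1 = box_set (grid_cell K m j1)" "k2 = box_set (grid_cell K m j2)" "j1 \<noteq> j2"
    by blast
  then show "interior k1 \<inter> interior k2 = {}"
    using grid_cells_interior_disjoint[OF assms(1)] by simp
next
  show "\<Union>(box_set ` grid_cell K m ` {j. \<forall>i. j i < m i}) = box_set K" (is "?U = _")
  proof
    show "?U \<subseteq> box_set K"
      using grid_cell_subset[OF assms(1)] by blast
    show "box_set K \<subseteq> ?U"
    proof
      fix x assume "x \<in> box_set K"
      then obtain j where "\<forall>i. j i < m i" "x \<in> box_set (grid_cell K m j)"
        by (rule grid_cells_cover[OF assms])
      then show "x \<in> ?U"
        by blast
    qed
  qed
qed

definition hoelder_subdivisions ::
  "real \<Rightarrow> real \<Rightarrow> real \<Rightarrow> ('n::finite box \<Rightarrow> ival) \<Rightarrow> 'n box \<Rightarrow> 'n \<Rightarrow> nat" where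
  "hoelder_subdivisions \<rho> C \<gamma> F K i =
     nat \<lceil>(snd K $ i - fst K $ i) * (C * box_vol K / (\<rho> * estimator F K)) powr (1 / \<gamma>)\<rceil>"

lemma hoelder_refine_eq_grid:
  assumes "estimator F K \<noteq> 0"
  shows "hoelder_refine \<rho> C \<gamma> F K =
    grid_cell K (hoelder_subdivisions \<rho> C \<gamma> F K) ` {j. \<forall>i. j i < hoelder_subdivisions \<rho> C \<gamma> F K i}"
  using assms by (simp add: hoelder_refine_def hoelder_subdivisions_def grid_cell_def Let_def)

lemma hoelder_subdivisions_pos:
  assumes "is_box K" "estimator F K \<noteq> 0" "C > 0" "\<rho> > 0"
  shows "0 < hoelder_subdivisions \<rho> C \<gamma> F K i"
proof -
  have "box_vol K \<noteq> 0"
    using assms(2) by auto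
  then have "C * box_vol K / (\<rho> * estimator F K) \<noteq> 0"
    using assms by simp
  then have "0 < (snd K $ i - fst K $ i) * (C * box_vol K / (\<rho> * estimator F K)) powr (1 / \<gamma>)"
    using box_side_pos[OF assms(1) \<open>box_vol K \<noteq> 0\<close>] by simp
  then show ?thesis
    unfolding hoelder_subdivisions_def by simp
qed

lemma hoelder_refine_division:
  assumes "is_box K" "C > 0" "\<rho> > 0"
  shows "box_set ` hoelder_refine \<rho> C \<gamma> F K division_of box_set K"
proof (cases "estimator F K = 0")
  case True
  have "box_set K \<noteq> {}"
    using assms(1) box_set_eq_empty_iff by blast
  then have "{box_set K} division_of box_set K"
    unfolding box_set_def by (rule division_of_self)
  then show ?thesis
    using True by (simp add: hoelder_refine_def)
next
  case False
  show ?thesis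
    unfolding hoelder_refine_eq_grid[where F = F and K = K, OF False]
    by (intro grid_cells_division assms(1) hoelder_subdivisions_pos[where F = F, OF assms(1) False assms(2,3)])
qed

lemma hoelder_grid_cell_width_le:
  assumes "is_box K" "estimator F K > 0" "C > 0" "\<rho> > 0" "\<gamma> > 0"
  shows "C * box_width (grid_cell K (hoelder_subdivisions \<rho> C \<gamma> F K) j) powr \<gamma>
    \<le> \<rho> * estimator F K / box_vol K"
proof -
  define X where "X = C * box_vol K / (\<rho> * estimator F K)"
  define m where "m = hoelder_subdivisions \<rho> C \<gamma> F K"
  have "box_vol K \<noteq> 0"
    using assms(2) by auto
  then have "box_vol K > 0"
    using box_vol_nonneg[OF assms(1)] by simp
  then have "X > 0"
    unfolding X_def using assms by (auto simp: zero_less_mult_iff)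
  have side: "(snd K $ i - fst K $ i) / real (m i) \<le> 1 / X powr (1 / \<gamma>)" for i
  proof -
    have l: "0 < snd K $ i - fst K $ i"
      using box_side_pos[OF assms(1), of i] \<open>box_vol K > 0\<close> by simp
    have "(snd K $ i - fst K $ i) * X powr (1 / \<gamma>) \<le> real (m i)"
      unfolding m_def hoelder_subdivisions_def X_def by linarith
    moreover have "0 < (snd K $ i - fst K $ i) * X powr (1 / \<gamma>)"
      using l \<open>X > 0\<close> by simp
    ultimately have "(snd K $ i - fst K $ i) / real (m i)
        \<le> (snd K $ i - fst K $ i) / ((snd K $ i - fst K $ i) * X powr (1 / \<gamma>))"
      using l by (intro divide_left_mono) auto
    then show ?thesis
      using l by simp
  qed
  have "0 \<le> box_width (grid_cell K m j)"
    using box_width_nonneg is_box_grid_cell[OF assms(1)] by blast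
  moreover have "box_width (grid_cell K m j) \<le> 1 / X powr (1 / \<gamma>)"
    unfolding box_width_grid_cell using side by simp
  ultimately have "box_width (grid_cell K m j) powr \<gamma> \<le> (1 / X powr (1 / \<gamma>)) powr \<gamma>"
    using assms(5) by (intro powr_mono2) auto
  also have "\<dots> = 1 / X"
    using \<open>X > 0\<close> assms(5) by (simp add: powr_divide powr_powr)
  finally show ?thesis
    using assms(3) \<open>box_vol K > 0\<close> unfolding X_def m_def by (simp add: field_simps)
qed

lemma hoelder_refine_estimator_le:
  assumes enc: "interval_enclosure \<Omega> f F" and hoelder: "hoelder_continuous \<Omega> F C \<gamma>"
    and C: "C > 0" and \<gamma>: "\<gamma> > 0" and \<rho>: "\<rho> > 0" and K: "is_box K" "box_set K \<subseteq> box_set \<Omega>"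
  shows "(\<Sum>K'\<in>hoelder_refine \<rho> C \<gamma> F K. estimator F K') \<le> \<rho> * estimator F K"
proof (cases "estimator F K = 0")
  case True
  then have "hoelder_refine \<rho> C \<gamma> F K = {K}"
    by (simp add: hoelder_refine_def)
  then show ?thesis
    using True by auto
next
  case False
  then have "estimator F K > 0"
    using estimator_nonneg[OF enc K] by linarith
  have "box_vol K > 0"
    using False box_vol_nonneg[OF K(1)] by (simp add: less_le)
  define m where "m = hoelder_subdivisions \<rho> C \<gamma> F K"
  define J where "J = {j. \<forall>i. j i < m i}"
  have cell: "is_box (grid_cell K m j) \<and> box_set (grid_cell K m j) \<subseteq> box_set \<Omega>" if "j \<in> J" for j
    using is_box_grid_cell[OF K(1)] grid_cell_subset[OF K(1)] K(2) that unfolding J_def by blast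
  have "estimator F (grid_cell K m j) \<le> \<rho> * estimator F K / box_vol K * box_vol (grid_cell K m j)"
    if "j \<in> J" for j
  proof -
    have "iwidth (F (grid_cell K m j)) \<le> C * box_width (grid_cell K m j) powr \<gamma>"
      using hoelder cell[OF that] unfolding hoelder_continuous_def by blast
    also have "\<dots> \<le> \<rho> * estimator F K / box_vol K"
      unfolding m_def using hoelder_grid_cell_width_le[where F = F, OF K(1) \<open>estimator F K > 0\<close> C \<rho> \<gamma>] .
    finally show ?thesis
      using box_vol_nonneg cell[OF that] by (intro mult_right_mono) blast+
  qed
  then have "(\<Sum>K'\<in>grid_cell K m ` J. estimator F K')
      \<le> (\<Sum>j\<in>J. \<rho> * estimator F K / box_vol K * box_vol (grid_cell K m j))"
    using cell estimator_nonneg[OF enc] unfolding J_def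
    by (intro order_trans[OF sum_image_le] sum_mono) (auto simp: finite_grid_index)
  also have "\<dots> = \<rho> * estimator F K"
    using \<open>box_vol K > 0\<close> hoelder_subdivisions_pos[where F = F, OF K(1) False C \<rho>]
    by (simp add: J_def m_def sum_distrib_left[symmetric] sum_box_vol_grid_cells)
  finally show ?thesis
    unfolding hoelder_refine_eq_grid[where F = F and K = K, OF False] J_def m_def .
qed

lemma dorfler_step_iter_subset: "(dorfler_step P \<eta> ^^ k) {} \<subseteq> P"
  by (induction k) (auto simp: dorfler_step_def)

lemma dorfler_step_psubset:
  assumes "finite P" "M \<subset> P"
  shows "M \<subset> dorfler_step P \<eta> M"
proof -
  have "Max (\<eta> ` (P - M)) \<in> \<eta> ` (P - M)"
    using assms by (intro Max_in) auto
  then obtain K where "Max (\<eta> ` (P - M)) = \<eta> K" "K \<in> P - M"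
    by (rule imageE)
  then have "K \<in> dorfler_step P \<eta> M" "K \<notin> M"
    unfolding dorfler_step_def by simp_all
  moreover have "M \<subseteq> dorfler_step P \<eta> M"
    by (simp add: dorfler_step_def)
  ultimately show ?thesis
    by blast
qed

lemma dorfler_step_iter_card:
  assumes "finite P"
  shows "(dorfler_step P \<eta> ^^ k) {} = P \<or> k \<le> card ((dorfler_step P \<eta> ^^ k) {})"
proof (induction k)
  case (Suc k)
  define M where "M = (dorfler_step P \<eta> ^^ k) {}"
  have "M \<subseteq> P"
    unfolding M_def by (rule dorfler_step_iter_subset)
  then have "dorfler_step P \<eta> M \<subseteq> P"
    by (auto simp: dorfler_step_def)
  show ?case
  proof (cases "M = P")
    case True
    then have "dorfler_step P \<eta> M = P"
      by (simp add: dorfler_step_def)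
    then show ?thesis
      by (simp add: M_def[symmetric])
  next
    case False
    then have "card M < card (dorfler_step P \<eta> M)"
      using assms \<open>M \<subseteq> P\<close> \<open>dorfler_step P \<eta> M \<subseteq> P\<close> dorfler_step_psubset
      by (meson finite_subset psubsetI psubset_card_mono)
    then show ?thesis
      using Suc.IH False by (simp add: M_def[symmetric])
  qed
qed simp

lemma dorfler_subset: "dorfler \<theta> P \<eta> \<subseteq> P"
  unfolding dorfler_def Let_def by (rule dorfler_step_iter_subset)

lemma dorfler_bulk:
  assumes "finite P" "\<And>K. K \<in> P \<Longrightarrow> 0 \<le> \<eta> K" "\<theta> \<le> 1"
  shows "\<theta> * sum \<eta> P \<le> sum \<eta> (dorfler \<theta> P \<eta>)"
proof -
  let ?it = "\<lambda>k. (dorfler_step P \<eta> ^^ k) {}"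
  \<comment> \<open>after card P steps everything is marked, so the LEAST in the definition of dorfler exists\<close>
  have "?it (card P) = P"
    using dorfler_step_iter_card[OF assms(1), where \<eta> = \<eta> and k = "card P"] dorfler_step_iter_subset assms(1)
    by (meson card_seteq)
  moreover have "\<theta> * sum \<eta> P \<le> sum \<eta> P"
    using assms sum_nonneg[of P \<eta>] mult_right_mono[of \<theta> 1 "sum \<eta> P"] by simp
  ultimately have "\<exists>k. \<not> sum \<eta> (?it k) < \<theta> * sum \<eta> P"
    by (metis not_less)
  from LeastI_ex[OF this] show ?thesis
    unfolding dorfler_def Let_def by simp
qed

lemma quad_bounds:
  assumes "local_quad_rule Rq" "positive_weights Rq" "exact_for_constants Rq" "is_box K"
    and bounds: "\<And>x. x \<in> box_set K \<Longrightarrow> lo \<le> f x \<and> f x \<le> hi"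
  shows "lo * box_vol K \<le> quad Rq f K" "quad Rq f K \<le> hi * box_vol K"
proof -
  have node: "0 < w \<and> lo \<le> f x \<and> f x \<le> hi" if "(w, x) \<in> set (Rq K)" for w x
    using assms that bounds unfolding local_quad_rule_def positive_weights_def by fastforce
  have vol: "c * box_vol K = (\<Sum>(w, x)\<leftarrow>Rq K. w * c)" for c
  proof -
    have "box_vol K = (\<Sum>p\<leftarrow>Rq K. fst p)"
      using assms(3,4) unfolding exact_for_constants_def by metis
    then show ?thesis
      by (simp add: sum_list_const_mult case_prod_unfold mult.commute)
  qed
  show "lo * box_vol K \<le> quad Rq f K"
    unfolding vol quad_def using node by (intro sum_list_mono) auto
  show "quad Rq f K \<le> hi * box_vol K"
    unfolding vol quad_def using node by (intro sum_list_mono) auto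
qed

lemma integral_bounds:
  assumes "is_box K" "f integrable_on box_set K"
    and bounds: "\<And>x. x \<in> box_set K \<Longrightarrow> lo \<le> f x \<and> f x \<le> hi"
  shows "lo * box_vol K \<le> integral (box_set K) f" "integral (box_set K) f \<le> hi * box_vol K"
proof -
  have const: "integral (box_set K) (\<lambda>x. c) = c * box_vol K" for c
    using content_box_set[OF assms(1)] by (simp add: box_set_def)
  show "lo * box_vol K \<le> integral (box_set K) f"
    unfolding const[symmetric] using assms by (intro integral_le) (auto simp: box_set_def)
  show "integral (box_set K) f \<le> hi * box_vol K"
    unfolding const[symmetric] using assms by (intro integral_le) (auto simp: box_set_def)
qed

lemma box_quad_error_le:
  assumes "local_quad_rule Rq" "positive_weights Rq" "exact_for_constants Rq" "is_box K"
    and "f integrable_on box_set K" "f ` box_set K \<subseteq> iset X"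
  shows "\<bar>integral (box_set K) f - quad Rq f K\<bar> \<le> iwidth X * box_vol K"
proof -
  have bounds: "fst X \<le> f x \<and> f x \<le> snd X" if "x \<in> box_set K" for x
    using assms(6) that unfolding iset_def by auto
  show ?thesis
    using quad_bounds[where lo = "fst X" and hi = "snd X" and f = f, OF assms(1-4) bounds]
      integral_bounds[OF assms(4,5) bounds]
    unfolding iwidth_def by (simp add: abs_le_iff left_diff_distrib)
qed

lemma integral_quad_error_le:
  assumes quad: "local_quad_rule Rq" "positive_weights Rq" "exact_for_constants Rq"
    and "continuous_on (box_set \<Omega>) f" and enc: "interval_enclosure \<Omega> f F"
    and P: "box_set ` P division_of box_set \<Omega>"
  shows "\<bar>integral (box_set \<Omega>) f - (\<Sum>K\<in>P. quad Rq f K)\<bar> \<le> (\<Sum>K\<in>P. estimator F K)"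
proof -
  have int: "f integrable_on box_set \<Omega>"
    using assms(4) unfolding box_set_def by (rule integrable_continuous)
  have "integral (box_set \<Omega>) f = (\<Sum>k\<in>box_set ` P. integral k f)"
    using integral_combine_division_topdown[OF int P] .
  also have "\<dots> = (\<Sum>K\<in>P. integral (box_set K) f)"
    using sum.reindex[OF division_of_box_set_inj[OF P]] by simp
  finally have "\<bar>integral (box_set \<Omega>) f - (\<Sum>K\<in>P. quad Rq f K)\<bar>
      \<le> (\<Sum>K\<in>P. \<bar>integral (box_set K) f - quad Rq f K\<bar>)"
    by (simp add: sum_subtractf[symmetric] sum_abs)
  also have "\<dots> \<le> (\<Sum>K\<in>P. estimator F K)"
  proof (rule sum_mono)
    fix K assume "K \<in> P"
    then have K: "is_box K" "box_set K \<subseteq> box_set \<Omega>"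
      by (rule division_of_box_set_memD[OF P])+
    then have "f integrable_on box_set K"
      using integrable_on_subcbox[OF int] unfolding box_set_def by blast
    moreover have "f ` box_set K \<subseteq> iset (F K)"
      using enc K unfolding interval_enclosure_def by blast
    ultimately show "\<bar>integral (box_set K) f - quad Rq f K\<bar> \<le> estimator F K"
      using box_quad_error_le[OF quad K(1)] by blast
  qed
  finally show ?thesis .
qed

lemma sum_refinement_le:
  fixes \<eta> :: "'a \<Rightarrow> real"
  assumes "finite P" "Pm \<subseteq> P" "\<And>K. K \<in> Pm \<Longrightarrow> finite (R K)"
    and "\<And>K'. K' \<in> \<Union>(R ` Pm) \<Longrightarrow> 0 \<le> \<eta> K'"
    and reduce: "\<And>K. K \<in> Pm \<Longrightarrow> sum \<eta> (R K) \<le> \<rho> * \<eta> K"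
    and bulk: "\<theta> * sum \<eta> P \<le> sum \<eta> Pm" and "\<rho> \<le> 1"
  shows "sum \<eta> ((P - Pm) \<union> \<Union>(R ` Pm)) \<le> (1 - \<theta> * (1 - \<rho>)) * sum \<eta> P"
proof -
  have "finite Pm"
    using assms(1,2) by (rule finite_subset[rotated])
  then have fin: "finite (SIGMA K:Pm. R K)"
    using assms(3) by (rule finite_SigmaI)
  have "sum \<eta> ((P - Pm) \<union> \<Union>(R ` Pm)) \<le> sum \<eta> (P - Pm) + sum \<eta> (\<Union>(R ` Pm))"
  proof -
    have "0 \<le> sum \<eta> ((P - Pm) \<inter> \<Union>(R ` Pm))"
      using assms(4) by (intro sum_nonneg) auto
    then show ?thesis
      using sum_Un[of "P - Pm" "\<Union>(R ` Pm)" \<eta>] assms(1,3) \<open>finite Pm\<close> by simp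
  qed
  also have "sum \<eta> (\<Union>(R ` Pm)) \<le> (\<Sum>K\<in>Pm. sum \<eta> (R K))"
  proof -
    have "\<Union>(R ` Pm) = snd ` (SIGMA K:Pm. R K)"
      by force
    then have "sum \<eta> (\<Union>(R ` Pm)) \<le> sum (\<eta> \<circ> snd) (SIGMA K:Pm. R K)"
      using assms(4) by (metis (no_types, lifting) fin image_eqI sum_image_le)
    also have "\<dots> = (\<Sum>K\<in>Pm. sum \<eta> (R K))"
      using sum.Sigma[of Pm R "\<lambda>_. \<eta>"] \<open>finite Pm\<close> assms(3) by (simp add: case_prod_unfold)
    finally show ?thesis .
  qed
  also have "\<dots> \<le> \<rho> * sum \<eta> Pm"
    using reduce by (simp add: sum_distrib_left sum_mono)
  also have "sum \<eta> (P - Pm) = sum \<eta> P - sum \<eta> Pm"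
    using assms(1,2) by (simp add: sum_diff)
  finally have "sum \<eta> ((P - Pm) \<union> \<Union>(R ` Pm)) \<le> sum \<eta> P - (1 - \<rho>) * sum \<eta> Pm"
    by (simp add: algebra_simps)
  also have "\<dots> \<le> sum \<eta> P - (1 - \<rho>) * (\<theta> * sum \<eta> P)"
    using bulk \<open>\<rho> \<le> 1\<close> by (intro diff_left_mono mult_left_mono) auto
  finally show ?thesis
    by (simp add: algebra_simps)
qed

lemma adaquad_partition_division:
  assumes "is_box \<Omega>" and marked: "\<And>P \<eta>. M P \<eta> \<subseteq> P"
    and refine: "\<And>K. is_box K \<Longrightarrow> box_set K \<subseteq> box_set \<Omega> \<Longrightarrow>
      box_set ` R K division_of box_set K"
  shows "box_set ` adaquad_partition M R F \<Omega> n division_of box_set \<Omega>"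
proof (induction n)
  case 0
  have "box_set \<Omega> \<noteq> {}"
    using assms(1) box_set_eq_empty_iff by blast
  then have "{box_set \<Omega>} division_of box_set \<Omega>"
    unfolding box_set_def by (rule division_of_self)
  then show ?case
    by simp
next
  case (Suc n)
  let ?P = "adaquad_partition M R F \<Omega> n"
  have "box_set ` R K division_of box_set K" if "K \<in> M ?P (estimator F)" for K
  proof -
    have "K \<in> ?P"
      using marked that by blast
    then show ?thesis
      by (intro refine division_of_box_set_memD[OF Suc])
  qed
  then show ?case
    using division_of_refine[OF Suc division_of_box_set_inj[OF Suc] marked] by (simp add: Let_def)
qed

lemma adaquad_eta_Suc_le:
  assumes "\<theta> \<le> 1" "0 < \<rho>" "\<rho> \<le> 1" "0 < C" "0 < \<gamma>" "is_box \<Omega>"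
    and enc: "interval_enclosure \<Omega> f F" and hoelder: "hoelder_continuous \<Omega> F C \<gamma>"
  shows "adaquad_eta (dorfler \<theta>) (hoelder_refine \<rho> C \<gamma> F) F \<Omega> (Suc n)
    \<le> (1 - \<theta> * (1 - \<rho>)) * adaquad_eta (dorfler \<theta>) (hoelder_refine \<rho> C \<gamma> F) F \<Omega> n"
proof -
  let ?R = "hoelder_refine \<rho> C \<gamma> F"
  let ?P = "adaquad_partition (dorfler \<theta>) ?R F \<Omega> n"
  let ?Pm = "dorfler \<theta> ?P (estimator F)"
  have div: "box_set ` ?P division_of box_set \<Omega>"
    using adaquad_partition_division[OF assms(6) dorfler_subset hoelder_refine_division[OF _ assms(4,2)]] .
  have marked: "is_box K" "box_set K \<subseteq> box_set \<Omega>" if "K \<in> ?Pm" for K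
    using division_of_box_set_memD[OF div subsetD[OF dorfler_subset that]] by blast+
  have div_R: "box_set ` ?R K division_of box_set K" if "K \<in> ?Pm" for K
    using hoelder_refine_division[OF marked(1)[OF that] assms(4,2)] .
  have "finite ?P"
    by (rule division_of_box_set_finite[OF div])
  moreover have "finite (?R K)" if "K \<in> ?Pm" for K
    by (rule division_of_box_set_finite[OF div_R[OF that]])
  moreover have "0 \<le> estimator F K'" if child: "K' \<in> \<Union>(?R ` ?Pm)" for K'
  proof -
    obtain K where K: "K \<in> ?Pm" "K' \<in> ?R K"
      using child by blast
    then have "is_box K'" "box_set K' \<subseteq> box_set K"
      using division_of_box_set_memD[OF div_R[OF K(1)] K(2)] by blast+
    then show ?thesis
      using estimator_nonneg[OF enc] marked(2)[OF K(1)] by (meson order_trans)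
  qed
  moreover have "sum (estimator F) (?R K) \<le> \<rho> * estimator F K" if "K \<in> ?Pm" for K
    using hoelder_refine_estimator_le[OF enc hoelder assms(4,5,2) marked[OF that]] .
  moreover have "\<theta> * sum (estimator F) ?P \<le> sum (estimator F) ?Pm"
    using \<open>finite ?P\<close> estimator_nonneg[OF enc division_of_box_set_memD[OF div]] assms(1)
    by (rule dorfler_bulk)
  ultimately have "sum (estimator F) ((?P - ?Pm) \<union> \<Union>(?R ` ?Pm))
      \<le> (1 - \<theta> * (1 - \<rho>)) * sum (estimator F) ?P"
    using assms(3) by (intro sum_refinement_le[OF _ dorfler_subset])
  then show ?thesis
    by (simp add: adaquad_eta_def Let_def)
qed

theorem theorem4p1:
  fixes \<theta> \<rho> C \<gamma> :: real
    and Rq :: "'n::finite box \<Rightarrow> (real \<times> (real^'n)) list"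
    and \<Omega> :: "'n box"
    and f :: "real^'n \<Rightarrow> real"
    and F :: "'n box \<Rightarrow> ival"
  assumes "0 < \<theta>" "\<theta> < 1" "0 < \<rho>" "\<rho> < 1"
    and "local_quad_rule Rq" "positive_weights Rq" "exact_for_constants Rq"
    and "\<forall>i. fst \<Omega> $ i < snd \<Omega> $ i"
    and "continuous_on (box_set \<Omega>) f"
    and "interval_enclosure \<Omega> f F"
    and "hoelder_continuous \<Omega> F C \<gamma>" "C > 0" "0 < \<gamma>" "\<gamma> \<le> 1"
  shows "(\<forall>n. \<bar>integral (box_set \<Omega>) f
               - adaquad_Q Rq f (dorfler \<theta>) (hoelder_refine \<rho> C \<gamma> F) F \<Omega> n\<bar>
             \<le> adaquad_eta (dorfler \<theta>) (hoelder_refine \<rho> C \<gamma> F) F \<Omega> n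
           \<and> adaquad_eta (dorfler \<theta>) (hoelder_refine \<rho> C \<gamma> F) F \<Omega> (Suc n)
             \<le> (1 - \<theta> * (1 - \<rho>)) * adaquad_eta (dorfler \<theta>) (hoelder_refine \<rho> C \<gamma> F) F \<Omega> n)
         \<and> adaquad_eta (dorfler \<theta>) (hoelder_refine \<rho> C \<gamma> F) F \<Omega> \<longlonglongrightarrow> 0"
proof -
  let ?P = "adaquad_partition (dorfler \<theta>) (hoelder_refine \<rho> C \<gamma> F) F \<Omega>"
  let ?\<eta> = "adaquad_eta (dorfler \<theta>) (hoelder_refine \<rho> C \<gamma> F) F \<Omega>"
  have "is_box \<Omega>"
    using assms(8) unfolding is_box_def by (simp add: less_imp_le)
  have div: "box_set ` ?P n division_of box_set \<Omega>" for n
    using adaquad_partition_division[OF \<open>is_box \<Omega>\<close> dorfler_subset hoelder_refine_division[OF _ assms(12,3)]] .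
  have error: "\<bar>integral (box_set \<Omega>) f - adaquad_Q Rq f (dorfler \<theta>) (hoelder_refine \<rho> C \<gamma> F) F \<Omega> n\<bar>
      \<le> ?\<eta> n" for n
    unfolding adaquad_Q_def adaquad_eta_def using integral_quad_error_le[OF assms(5-7,9,10) div] .
  have contraction: "?\<eta> (Suc n) \<le> (1 - \<theta> * (1 - \<rho>)) * ?\<eta> n" for n
    using adaquad_eta_Suc_le[OF _ assms(3) _ assms(12,13) \<open>is_box \<Omega>\<close> assms(10,11)] assms(2,4) by simp
  have "0 \<le> ?\<eta> n" for n
    unfolding adaquad_eta_def
    using estimator_nonneg[OF assms(10) division_of_box_set_memD[OF div]] by (simp add: sum_nonneg)
  moreover have "1 - \<theta> * (1 - \<rho>) < 1"
    using assms(1,4) by simp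
  ultimately have "summable ?\<eta>"
    using contraction by (intro summable_ratio_test[where N = 0]) auto
  then show ?thesis
    using error contraction summable_LIMSEQ_zero by blast
qed

end
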